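(* Let $(V,E)$ be a finite connected bipartite graph with parts $V=V_1\cup V_2$ and positive edge weight function $m$, and let $\lambda$ be its spectral expansion. Let $U\subseteq V_1$ be non-empty, $N(U)=\{v\in V_2:\exists u\in U,\ \{u,v\}\in E\}$, $0<\delta<1$, and let $W\subseteq N(U)$ be such that for every $u\in U$, $$\frac{\sum_{v\in W,\ \{u,v\}\in E}m(\{u,v\})}{m(u)}\ge\delta.$$ Then $$\frac{m(U)}{m(W)}\le\frac{4}{3\delta}\left(\frac{2\lambda}{\sqrt{\delta}}+\frac{m(U)}{m(V_1)}\right).$$
   Context: For a weighted graph, $m(v)=\sum_{e\ni v}m(e)$ and $m(S)=\sum_{v\in S}m(v)$ for a vertex set $S$. Let $\ell^2(V)$ be the real functions on $V$ with inner product $\langle\phi,\psi\rangle=\sum_v m(v)\phi(v)\psi(v)$, and let $M$ be the random walk operator $M\phi(v)=\frac1{m(v)}\sum_{u:\{u,v\}\in E}m(\{u,v\})\phi(u)$. For a bipartite graph with parts $V_1,V_2$, the spectral expansion $\lambda$ is the largest absolute value of an eigenvalue of $M$ restricted to the orthogonal complement of $\operatorname{span}\{\mathbb{1}_{V_1},\mathbb{1}_{V_2}\}$ (equivalently, the smallest $\lambda$ with $\|M\phi\|\le\lambda\|\phi\|$ for all $\phi\perp\mathbb{1}_{V_1},\mathbb{1}_{V_2}$). *)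

theory Defs
  imports "HOL-Analysis.Analysis"
begin

definition weighted_bipartite :: "'a set \<Rightarrow> 'a set \<Rightarrow> 'a set set \<Rightarrow> ('a set \<Rightarrow> real) \<Rightarrow> bool" where
  "weighted_bipartite V1 V2 E m \<longleftrightarrow>
     finite V1 \<and> finite V2 \<and> V1 \<inter> V2 = {} \<and>
     (\<forall>e\<in>E. \<exists>u\<in>V1. \<exists>v\<in>V2. e = {u, v}) \<and>
     (\<forall>e\<in>E. m e > 0)"

definition graph_connected :: "'a set \<Rightarrow> 'a set set \<Rightarrow> bool" where
  "graph_connected V E \<longleftrightarrow> (\<forall>u\<in>V. \<forall>v\<in>V. (\<lambda>x y. {x, y} \<in> E)\<^sup>*\<^sup>* u v)"

definition vweight :: "'a set set \<Rightarrow> ('a set \<Rightarrow> real) \<Rightarrow> 'a \<Rightarrow> real" where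
  "vweight E m v = (\<Sum>e\<in>{e\<in>E. v \<in> e}. m e)"

definition setweight :: "'a set set \<Rightarrow> ('a set \<Rightarrow> real) \<Rightarrow> 'a set \<Rightarrow> real" where
  "setweight E m S = (\<Sum>v\<in>S. vweight E m v)"

definition l2_inner :: "'a set \<Rightarrow> 'a set set \<Rightarrow> ('a set \<Rightarrow> real) \<Rightarrow> ('a \<Rightarrow> real) \<Rightarrow> ('a \<Rightarrow> real) \<Rightarrow> real" where
  "l2_inner V E m \<phi> \<psi> = (\<Sum>v\<in>V. vweight E m v * \<phi> v * \<psi> v)"

definition l2_norm :: "'a set \<Rightarrow> 'a set set \<Rightarrow> ('a set \<Rightarrow> real) \<Rightarrow> ('a \<Rightarrow> real) \<Rightarrow> real" where
  "l2_norm V E m \<phi> = sqrt (l2_inner V E m \<phi> \<phi>)"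

definition walk_op :: "'a set \<Rightarrow> 'a set set \<Rightarrow> ('a set \<Rightarrow> real) \<Rightarrow> ('a \<Rightarrow> real) \<Rightarrow> 'a \<Rightarrow> real" where
  "walk_op V E m \<phi> v = (1 / vweight E m v) * (\<Sum>u\<in>{u\<in>V. {u, v} \<in> E}. m {u, v} * \<phi> u)"

definition spectral_expansion :: "'a set \<Rightarrow> 'a set \<Rightarrow> 'a set set \<Rightarrow> ('a set \<Rightarrow> real) \<Rightarrow> real" where
  "spectral_expansion V1 V2 E m =
     Inf {l. l \<ge> 0 \<and> (\<forall>\<phi>.
        l2_inner (V1 \<union> V2) E m \<phi> (indicator V1) = 0 \<longrightarrow>
        l2_inner (V1 \<union> V2) E m \<phi> (indicator V2) = 0 \<longrightarrow>
        l2_norm (V1 \<union> V2) E m (walk_op (V1 \<union> V2) E m \<phi>) \<le> l * l2_norm (V1 \<union> V2) E m \<phi>)}"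

definition nbhd :: "'a set \<Rightarrow> 'a set set \<Rightarrow> 'a set \<Rightarrow> 'a set" where
  "nbhd V2 E U = {v\<in>V2. \<exists>u\<in>U. {u, v} \<in> E}"

end

theory Submission
  imports Defs
begin

text \<open>The test function \<open>f = 1\<^sub>U - (m(U) / m(V\<^sub>1)) 1\<^sub>V\<^sub>1\<close> is orthogonal to \<open>1\<^sub>V\<^sub>1\<close> and
  \<open>1\<^sub>V\<^sub>2\<close>, so \<open>\<parallel>M f\<parallel> \<le> \<lambda> \<parallel>f\<parallel> \<le> \<lambda> sqrt m(U)\<close>. Pairing \<open>M f\<close> with \<open>1\<^sub>W\<close> gives
  \<open>e(U, W) - m(U) m(W) / m(V\<^sub>1)\<close>, where \<open>e(U, W)\<close> is the total weight of the edges between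
  \<open>U\<close> and \<open>W\<close>; by Cauchy-Schwarz this is at most \<open>\<lambda> sqrt (m(U) m(W))\<close>. The degree hypothesis
  gives \<open>\<delta> m(U) \<le> e(U, W) \<le> m(W)\<close>, and solving for \<open>m(U) / m(W)\<close> yields a bound that is
  stronger than the claimed one.\<close>

lemma weighted_bipartiteD:
  assumes "weighted_bipartite V1 V2 E m"
  shows "finite V1" "finite V2" "V1 \<inter> V2 = {}"
    and "\<And>e. e \<in> E \<Longrightarrow> \<exists>u\<in>V1. \<exists>v\<in>V2. e = {u, v}"
    and "\<And>e. e \<in> E \<Longrightarrow> m e > 0"
  using assms unfolding weighted_bipartite_def by auto

lemma vweight_nonneg:
  assumes "weighted_bipartite V1 V2 E m"
  shows "vweight E m v \<ge> 0"
  unfolding vweight_def using weighted_bipartiteD(5)[OF assms]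
  by (intro sum_nonneg) (auto intro: less_imp_le)

lemma setweight_nonneg:
  assumes "weighted_bipartite V1 V2 E m"
  shows "setweight E m S \<ge> 0"
  unfolding setweight_def using vweight_nonneg[OF assms] by (rule sum_nonneg)

lemma weighted_bipartite_neighbour_in_V1:
  assumes "weighted_bipartite V1 V2 E m" "{u, v} \<in> E" "v \<in> V2"
  shows "u \<in> V1"
  using weighted_bipartiteD(3,4)[OF assms(1)] assms(2,3) by (fastforce simp: doubleton_eq_iff)

lemma sum_neighbour_weights:
  assumes "weighted_bipartite V1 V2 E m"
  shows "(\<Sum>u\<in>{u\<in>V1 \<union> V2. {u, v} \<in> E}. m {u, v}) = vweight E m v"
proof -
  have "inj_on (\<lambda>u. {u, v}) {u\<in>V1 \<union> V2. {u, v} \<in> E}"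
    by (auto simp: inj_on_def doubleton_eq_iff)
  moreover have "(\<lambda>u. {u, v}) ` {u\<in>V1 \<union> V2. {u, v} \<in> E} = {e\<in>E. v \<in> e}"
  proof (intro equalityI subsetI)
    fix e assume "e \<in> {e\<in>E. v \<in> e}"
    then obtain a b where "a \<in> V1" "b \<in> V2" "e = {a, b}" "e \<in> E" "v \<in> e"
      using weighted_bipartiteD(4)[OF assms] by blast
    then show "e \<in> (\<lambda>u. {u, v}) ` {u\<in>V1 \<union> V2. {u, v} \<in> E}"
      by (auto simp: insert_commute)
  qed auto
  ultimately show ?thesis
    unfolding vweight_def by (metis (no_types, lifting) sum.reindex_cong)
qed

lemma sum_neighbour_weights_le:
  assumes "weighted_bipartite V1 V2 E m" "S \<subseteq> V1 \<union> V2"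
  shows "(\<Sum>u\<in>{u\<in>S. {u, v} \<in> E}. m {u, v}) \<le> vweight E m v"
proof -
  have "(\<Sum>u\<in>{u\<in>S. {u, v} \<in> E}. m {u, v}) \<le> (\<Sum>u\<in>{u\<in>V1 \<union> V2. {u, v} \<in> E}. m {u, v})"
    using assms weighted_bipartiteD[OF assms(1)] by (intro sum_mono2) (auto intro: less_imp_le)
  then show ?thesis
    unfolding sum_neighbour_weights[OF assms(1)] .
qed

lemma sum_adjacent_swap:
  assumes "finite A" "finite B"
  shows "(\<Sum>v\<in>A. \<Sum>u\<in>{u\<in>B. {u, v} \<in> E}. f u v) = (\<Sum>u\<in>B. \<Sum>v\<in>{v\<in>A. {u, v} \<in> E}. f u v)"
  using assms by (simp add: sum.inter_filter sum.swap[of _ A B])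

lemma Cauchy_Schwarz_ineq_sum_weighted:
  fixes w f g :: "'a \<Rightarrow> real"
  assumes "\<And>i. i \<in> I \<Longrightarrow> w i \<ge> 0"
  shows "(\<Sum>i\<in>I. w i * f i * g i)\<^sup>2 \<le> (\<Sum>i\<in>I. w i * (f i)\<^sup>2) * (\<Sum>i\<in>I. w i * (g i)\<^sup>2)"
proof -
  have "(\<Sum>i\<in>I. w i * f i * g i) = (\<Sum>i\<in>I. sqrt (w i) * f i * (sqrt (w i) * g i))"
    using assms by (intro sum.cong) (auto simp: algebra_simps real_sqrt_mult_self)
  moreover have "(\<Sum>i\<in>I. w i * (h i)\<^sup>2) = (\<Sum>i\<in>I. (sqrt (w i) * h i)\<^sup>2)" for h
    using assms by (intro sum.cong) (auto simp: power_mult_distrib)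
  ultimately show ?thesis
    using Cauchy_Schwarz_ineq_sum[of "\<lambda>i. sqrt (w i) * f i" "\<lambda>i. sqrt (w i) * g i" I]
    by simp
qed

lemma l2_inner_commute: "l2_inner V E m \<phi> \<psi> = l2_inner V E m \<psi> \<phi>"
  unfolding l2_inner_def by (simp add: ac_simps)

lemma l2_inner_diff_scaled:
  "l2_inner V E m (\<lambda>v. \<phi> v - c * \<psi> v) \<rho> = l2_inner V E m \<phi> \<rho> - c * l2_inner V E m \<psi> \<rho>"
  unfolding l2_inner_def by (simp add: sum_subtractf sum_distrib_left algebra_simps)

lemma l2_inner_indicator:
  assumes "finite V" "S \<subseteq> V"
  shows "l2_inner V E m \<phi> (indicator S) = (\<Sum>v\<in>S. vweight E m v * \<phi> v)"
  unfolding l2_inner_def Indicator_Function.sum_mult_indicator[OF assms(1)] Int_absorb1[OF assms(2)]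
  ..

lemma l2_norm_indicator:
  assumes "finite V" "S \<subseteq> V"
  shows "l2_norm V E m (indicator S) = sqrt (setweight E m S)"
  unfolding l2_norm_def setweight_def l2_inner_indicator[OF assms]
  by (simp add: indicator_def)

lemma l2_inner_le_l2_norm_mult:
  assumes "\<And>v. v \<in> V \<Longrightarrow> vweight E m v \<ge> 0"
  shows "l2_inner V E m \<phi> \<psi> \<le> l2_norm V E m \<phi> * l2_norm V E m \<psi>"
proof -
  have "(l2_inner V E m \<phi> \<psi>)\<^sup>2 \<le> l2_inner V E m \<phi> \<phi> * l2_inner V E m \<psi> \<psi>"
    using Cauchy_Schwarz_ineq_sum_weighted[of V "vweight E m" \<phi> \<psi>] assms
    by (simp add: l2_inner_def power2_eq_square mult.assoc)
  then show ?thesis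
    unfolding l2_norm_def real_sqrt_mult[symmetric] by (rule real_le_rsqrt)
qed

lemma walk_op_diff_scaled:
  "walk_op V E m (\<lambda>v. \<phi> v - c * \<psi> v) = (\<lambda>v. walk_op V E m \<phi> v - c * walk_op V E m \<psi> v)"
  unfolding walk_op_def by (simp add: fun_eq_iff sum_subtractf sum_distrib_left algebra_simps)

lemma l2_norm_walk_op_le:
  assumes wb: "weighted_bipartite V1 V2 E m"
  shows "l2_norm (V1 \<union> V2) E m (walk_op (V1 \<union> V2) E m \<phi>) \<le> l2_norm (V1 \<union> V2) E m \<phi>"
proof -
  let ?V = "V1 \<union> V2"
  let ?w = "vweight E m"
  let ?N = "\<lambda>v. {u\<in>?V. {u, v} \<in> E}"
  let ?T = "\<lambda>v. \<Sum>u\<in>?N v. m {u, v} * (\<phi> u)\<^sup>2"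
  have fin: "finite ?V"
    using weighted_bipartiteD(1,2)[OF wb] by simp
  have m_nonneg: "m {u, v} \<ge> 0" if "u \<in> ?N v" for u v
    using that weighted_bipartiteD(5)[OF wb] by (auto intro: less_imp_le)
  have pointwise: "?w v * walk_op ?V E m \<phi> v * walk_op ?V E m \<phi> v \<le> ?T v" for v
  proof (cases "?w v = 0")
    case True
    then show ?thesis
      using m_nonneg by (auto intro!: sum_nonneg)
  next
    case False
    then have w_pos: "?w v > 0"
      using vweight_nonneg[OF wb, of v] by simp
    let ?S = "\<Sum>u\<in>?N v. m {u, v} * \<phi> u"
    have "?S\<^sup>2 \<le> (\<Sum>u\<in>?N v. m {u, v}) * ?T v"
      using Cauchy_Schwarz_ineq_sum_weighted[of "?N v" "\<lambda>u. m {u, v}" "\<lambda>_. 1" \<phi>] m_nonneg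
      by simp
    then have "?S\<^sup>2 \<le> ?w v * ?T v"
      unfolding sum_neighbour_weights[OF wb] .
    moreover have "?w v * walk_op ?V E m \<phi> v * walk_op ?V E m \<phi> v = ?S\<^sup>2 / ?w v"
      unfolding walk_op_def using w_pos by (simp add: power2_eq_square field_simps)
    ultimately show ?thesis
      using w_pos by (simp add: divide_le_eq mult.commute)
  qed
  have "l2_inner ?V E m (walk_op ?V E m \<phi>) (walk_op ?V E m \<phi>) \<le> (\<Sum>v\<in>?V. ?T v)"
    unfolding l2_inner_def using pointwise by (rule sum_mono)
  also have "\<dots> = (\<Sum>u\<in>?V. (\<Sum>v\<in>{v\<in>?V. {u, v} \<in> E}. m {u, v}) * (\<phi> u)\<^sup>2)"
    unfolding sum_adjacent_swap[OF fin fin] by (simp add: sum_distrib_right)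
  also have "\<dots> = l2_inner ?V E m \<phi> \<phi>"
    unfolding l2_inner_def using sum_neighbour_weights[OF wb]
    by (simp add: insert_commute power2_eq_square mult.assoc)
  finally show ?thesis
    unfolding l2_norm_def by simp
qed

text \<open>The contraction bound puts \<open>1\<close> into the set whose infimum defines the spectral
  expansion; without it that set might be empty and \<open>Inf\<close> would return a junk value.\<close>
lemma spectral_expansionD:
  assumes wb: "weighted_bipartite V1 V2 E m"
  shows "spectral_expansion V1 V2 E m \<ge> 0"
    and "l2_inner (V1 \<union> V2) E m \<phi> (indicator V1) = 0 \<Longrightarrow>
      l2_inner (V1 \<union> V2) E m \<phi> (indicator V2) = 0 \<Longrightarrow>
      l2_norm (V1 \<union> V2) E m (walk_op (V1 \<union> V2) E m \<phi>)
        \<le> spectral_expansion V1 V2 E m * l2_norm (V1 \<union> V2) E m \<phi>"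
proof -
  let ?V = "V1 \<union> V2"
  define S where "S = {l. l \<ge> 0 \<and> (\<forall>\<phi>.
        l2_inner ?V E m \<phi> (indicator V1) = 0 \<longrightarrow>
        l2_inner ?V E m \<phi> (indicator V2) = 0 \<longrightarrow>
        l2_norm ?V E m (walk_op ?V E m \<phi>) \<le> l * l2_norm ?V E m \<phi>)}"
  have lam: "spectral_expansion V1 V2 E m = Inf S"
    unfolding spectral_expansion_def S_def ..
  have one: "1 \<in> S"
    unfolding S_def using l2_norm_walk_op_le[OF wb] by auto
  then have S_ne: "S \<noteq> {}"
    by auto
  show "spectral_expansion V1 V2 E m \<ge> 0"
    unfolding lam by (rule cInf_greatest[OF S_ne]) (simp add: S_def)
  assume "l2_inner ?V E m \<phi> (indicator V1) = 0" "l2_inner ?V E m \<phi> (indicator V2) = 0"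
  then have bound: "l2_norm ?V E m (walk_op ?V E m \<phi>) \<le> l * l2_norm ?V E m \<phi>" if "l \<in> S" for l
    using that unfolding S_def by auto
  have norm_nonneg: "l2_norm ?V E m \<phi> \<ge> 0"
    unfolding l2_norm_def l2_inner_def using vweight_nonneg[OF wb]
    by (auto intro!: sum_nonneg simp: mult.assoc)
  show "l2_norm ?V E m (walk_op ?V E m \<phi>) \<le> spectral_expansion V1 V2 E m * l2_norm ?V E m \<phi>"
  proof (cases "l2_norm ?V E m \<phi> = 0")
    case True
    then show ?thesis
      using bound[OF one] by simp
  next
    case False
    then have "l2_norm ?V E m (walk_op ?V E m \<phi>) / l2_norm ?V E m \<phi> \<le> Inf S"
      using bound norm_nonneg by (intro cInf_greatest[OF S_ne]) (simp add: divide_le_eq mult.commute)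
    then show ?thesis
      unfolding lam using False norm_nonneg by (simp add: divide_le_eq)
  qed
qed

definition edges_weight :: "'a set set \<Rightarrow> ('a set \<Rightarrow> real) \<Rightarrow> 'a set \<Rightarrow> 'a set \<Rightarrow> real" where
  "edges_weight E m A B = (\<Sum>v\<in>B. \<Sum>u\<in>{u\<in>A. {u, v} \<in> E}. m {u, v})"

lemma edges_weight_le_setweight:
  assumes "weighted_bipartite V1 V2 E m" "A \<subseteq> V1 \<union> V2"
  shows "edges_weight E m A B \<le> setweight E m B"
  unfolding edges_weight_def setweight_def
  using sum_neighbour_weights_le[OF assms] by (rule sum_mono)

lemma edges_weight_V1:
  assumes wb: "weighted_bipartite V1 V2 E m" and "B \<subseteq> V2"
  shows "edges_weight E m V1 B = setweight E m B"
  unfolding edges_weight_def setweight_def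
proof (rule sum.cong[OF refl])
  fix v assume "v \<in> B"
  then have "{u\<in>V1. {u, v} \<in> E} = {u\<in>V1 \<union> V2. {u, v} \<in> E}"
    using assms weighted_bipartite_neighbour_in_V1[OF wb] by blast
  then show "(\<Sum>u\<in>{u\<in>V1. {u, v} \<in> E}. m {u, v}) = vweight E m v"
    using sum_neighbour_weights[OF wb] by simp
qed

lemma scaled_setweight_le_edges_weight:
  assumes "finite A" "finite B"
    and "\<And>u. u \<in> A \<Longrightarrow> \<delta> * vweight E m u \<le> (\<Sum>v\<in>{v\<in>B. {u, v} \<in> E}. m {u, v})"
  shows "\<delta> * setweight E m A \<le> edges_weight E m A B"
  unfolding edges_weight_def setweight_def sum_distrib_left sum_adjacent_swap[OF assms(2,1)]
  using assms(3) by (rule sum_mono)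

lemma vweight_mult_walk_op_indicator:
  assumes wb: "weighted_bipartite V1 V2 E m" and "S \<subseteq> V1 \<union> V2"
  shows "vweight E m v * walk_op (V1 \<union> V2) E m (indicator S) v
           = (\<Sum>u\<in>{u\<in>S. {u, v} \<in> E}. m {u, v})"
proof (cases "vweight E m v = 0")
  case True
  have "(\<Sum>u\<in>{u\<in>S. {u, v} \<in> E}. m {u, v}) \<ge> 0"
    using weighted_bipartiteD(5)[OF wb] by (intro sum_nonneg) (auto intro: less_imp_le)
  then show ?thesis
    using True sum_neighbour_weights_le[OF assms, of v] by simp
next
  case False
  have "finite {u\<in>V1 \<union> V2. {u, v} \<in> E}"
    using weighted_bipartiteD(1,2)[OF wb] by simp
  then have "(\<Sum>u\<in>{u\<in>V1 \<union> V2. {u, v} \<in> E}. m {u, v} * indicator S u)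
               = (\<Sum>u\<in>{u\<in>S. {u, v} \<in> E}. m {u, v})"
    unfolding Indicator_Function.sum_mult_indicator[OF \<open>finite _\<close>] using assms(2)
    by (intro sum.cong) auto
  then show ?thesis
    unfolding walk_op_def using False by simp
qed

lemma l2_inner_walk_op_indicator:
  assumes wb: "weighted_bipartite V1 V2 E m" and "A \<subseteq> V1 \<union> V2" "B \<subseteq> V1 \<union> V2"
  shows "l2_inner (V1 \<union> V2) E m (walk_op (V1 \<union> V2) E m (indicator A)) (indicator B)
           = edges_weight E m A B"
proof -
  have "finite (V1 \<union> V2)"
    using weighted_bipartiteD(1,2)[OF wb] by simp
  then show ?thesis
    unfolding l2_inner_indicator[OF \<open>finite (V1 \<union> V2)\<close> assms(3)] edges_weight_def
    using vweight_mult_walk_op_indicator[OF wb assms(2)] by simp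
qed

lemma expander_mixing_upper:
  assumes wb: "weighted_bipartite V1 V2 E m"
    and "U \<subseteq> V1" "W \<subseteq> V2" "setweight E m V1 > 0"
  shows "edges_weight E m U W - setweight E m U * setweight E m W / setweight E m V1
           \<le> spectral_expansion V1 V2 E m * sqrt (setweight E m U) * sqrt (setweight E m W)"
proof -
  let ?V = "V1 \<union> V2"
  let ?M = "walk_op ?V E m"
  let ?lam = "spectral_expansion V1 V2 E m"
  define b where "b = setweight E m U / setweight E m V1"
  define f where "f = (\<lambda>v. indicator U v - b * indicator V1 v :: real)"
  have fin: "finite ?V"
    using weighted_bipartiteD(1,2)[OF wb] by simp
  have subsets: "U \<subseteq> ?V" "V1 \<subseteq> ?V" "V2 \<subseteq> ?V" "W \<subseteq> ?V"
    using assms(2,3) by auto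
  have inner_indicator: "l2_inner ?V E m (indicator S) (indicator T) = setweight E m (S \<inter> T)"
    if "S \<subseteq> ?V" "T \<subseteq> ?V" for S T
    unfolding setweight_def l2_inner_indicator[OF fin that(2)]
      Indicator_Function.sum_mult_indicator[OF finite_subset[OF that(2) fin]]
    by (simp only: Int_commute)
  have f_V1: "l2_inner ?V E m f (indicator V1) = 0"
    unfolding f_def l2_inner_diff_scaled inner_indicator[OF subsets(1,2)]
      inner_indicator[OF subsets(2,2)] b_def
    using assms(2,4) by (simp add: Int_absorb2)
  have "U \<inter> V2 = {}" "V1 \<inter> V2 = {}"
    using assms(2) weighted_bipartiteD(3)[OF wb] by auto
  then have f_V2: "l2_inner ?V E m f (indicator V2) = 0"
    unfolding f_def l2_inner_diff_scaled inner_indicator[OF subsets(1,3)]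
      inner_indicator[OF subsets(2,3)]
    by (simp add: setweight_def)
  have f_U: "l2_inner ?V E m f (indicator U) = (1 - b) * setweight E m U"
    unfolding f_def l2_inner_diff_scaled inner_indicator[OF subsets(1,1)]
      inner_indicator[OF subsets(2,1)]
    using assms(2) by (simp add: Int_absorb1 algebra_simps)
  have "l2_inner ?V E m f f = l2_inner ?V E m (indicator U) f - b * l2_inner ?V E m (indicator V1) f"
    using l2_inner_diff_scaled[of ?V E m "indicator U" b "indicator V1" f] unfolding f_def[symmetric] .
  then have "l2_inner ?V E m f f = (1 - b) * setweight E m U"
    using f_U f_V1 l2_inner_commute[of ?V E m f "indicator U"]
      l2_inner_commute[of ?V E m f "indicator V1"] by simp
  moreover have "b * setweight E m U \<ge> 0"
    unfolding b_def using setweight_nonneg[OF wb] by simp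
  ultimately have "l2_inner ?V E m f f \<le> setweight E m U"
    by (simp add: algebra_simps)
  then have f_norm: "l2_norm ?V E m f \<le> sqrt (setweight E m U)"
    unfolding l2_norm_def by (rule real_sqrt_le_mono)
  have "edges_weight E m U W - b * setweight E m W = l2_inner ?V E m (?M f) (indicator W)"
    unfolding f_def walk_op_diff_scaled l2_inner_diff_scaled
      l2_inner_walk_op_indicator[OF wb subsets(1,4)] l2_inner_walk_op_indicator[OF wb subsets(2,4)]
      edges_weight_V1[OF wb assms(3)] ..
  also have "\<dots> \<le> l2_norm ?V E m (?M f) * l2_norm ?V E m (indicator W)"
    using vweight_nonneg[OF wb] by (intro l2_inner_le_l2_norm_mult)
  also have "\<dots> \<le> ?lam * l2_norm ?V E m f * sqrt (setweight E m W)"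
    unfolding l2_norm_indicator[OF fin subsets(4)]
    using spectral_expansionD(2)[OF wb f_V1 f_V2]
    by (rule mult_right_mono) (simp add: setweight_nonneg[OF wb])
  also have "\<dots> \<le> ?lam * sqrt (setweight E m U) * sqrt (setweight E m W)"
    using mult_left_mono[OF f_norm spectral_expansionD(1)[OF wb]]
    by (rule mult_right_mono) (simp add: setweight_nonneg[OF wb])
  finally show ?thesis
    unfolding b_def by simp
qed

lemma ratio_le_of_mixing_bound:
  fixes a b c lam \<delta> e :: real
  assumes "0 < a" "0 < c" "0 \<le> lam" "0 < \<delta>"
    and "\<delta> * a \<le> e" "e \<le> b" "e - a * b / c \<le> lam * sqrt a * sqrt b"
  shows "a / b \<le> 4 / (3 * \<delta>) * (2 * lam / sqrt \<delta> + a / c)"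
proof -
  have b_pos: "0 < b"
    using assms(1,4-6) mult_pos_pos[of \<delta> a] by linarith
  define x where "x = a / b"
  have "\<delta> * x \<le> 1"
    using assms(5,6) b_pos by (simp add: x_def field_simps)
  then have "sqrt \<delta> * sqrt x \<le> 1"
    by (metis real_sqrt_le_1_iff real_sqrt_mult)
  from mult_left_mono[OF this assms(3)] have "lam * sqrt x * sqrt \<delta> \<le> lam"
    by (simp add: ac_simps)
  then have sqrt_x: "lam * sqrt x \<le> lam / sqrt \<delta>"
    using assms(4) by (simp add: field_simps)
  have "lam * sqrt a * sqrt b / b = lam * sqrt x"
    using assms(1) b_pos by (simp add: x_def real_sqrt_divide field_simps)
  then have "e / b - a / c \<le> lam * sqrt x"
    using divide_right_mono[OF assms(7), of b] b_pos by (simp add: diff_divide_distrib)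
  moreover have "\<delta> * x \<le> e / b"
    using assms(5) b_pos by (simp add: x_def divide_right_mono)
  ultimately have "\<delta> * x \<le> a / c + lam / sqrt \<delta>"
    using sqrt_x by linarith
  moreover have "0 \<le> a / c" "0 \<le> lam / sqrt \<delta>"
    using assms(1-4) by auto
  ultimately have "\<delta> * x \<le> 4 / 3 * (2 * (lam / sqrt \<delta>) + a / c)"
    unfolding ring_distribs by linarith
  then show ?thesis
    using assms(4) by (simp add: x_def field_simps)
qed

theorem lemma7p8:
  fixes V1 V2 :: "'a set" and E :: "'a set set" and m :: "'a set \<Rightarrow> real"
    and U W :: "'a set" and \<delta> :: real
  assumes "weighted_bipartite V1 V2 E m"
    and "graph_connected (V1 \<union> V2) E"
    and "U \<subseteq> V1" and "U \<noteq> {}"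
    and "0 < \<delta>" and "\<delta> < 1"
    and "W \<subseteq> nbhd V2 E U"
    and "\<forall>u\<in>U. (\<Sum>v\<in>{v\<in>W. {u, v} \<in> E}. m {u, v}) / vweight E m u \<ge> \<delta>"
  shows "setweight E m U / setweight E m W
           \<le> 4 / (3 * \<delta>) * (2 * spectral_expansion V1 V2 E m / sqrt \<delta>
                             + setweight E m U / setweight E m V1)"
proof -
  note wb = assms(1)
  have W_V2: "W \<subseteq> V2"
    using assms(7) unfolding nbhd_def by auto
  then have fin: "finite U" "finite W"
    using assms(3) weighted_bipartiteD(1,2)[OF wb] finite_subset by auto
  \<comment> \<open>Since \<open>x / 0 = 0\<close>, the degree hypothesis forces every vertex of \<open>U\<close> to have positive weight.\<close>
  have vweight_pos: "vweight E m u > 0"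
    and degree: "\<delta> * vweight E m u \<le> (\<Sum>v\<in>{v\<in>W. {u, v} \<in> E}. m {u, v})" if "u \<in> U" for u
    using assms(5,8) that vweight_nonneg[OF wb, of u]
    by (fastforce simp: le_divide_eq split: if_splits)+
  have U_pos: "setweight E m U > 0"
    unfolding setweight_def using fin(1) assms(4) vweight_pos by (rule sum_pos)
  moreover have "setweight E m U \<le> setweight E m V1"
    unfolding setweight_def using assms(3) weighted_bipartiteD(1)[OF wb] vweight_nonneg[OF wb]
    by (intro sum_mono2) auto
  ultimately have V1_pos: "setweight E m V1 > 0"
    by linarith
  show ?thesis
  proof (rule ratio_le_of_mixing_bound[OF U_pos V1_pos spectral_expansionD(1)[OF wb] assms(5)])
    show "\<delta> * setweight E m U \<le> edges_weight E m U W"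
      using fin degree by (rule scaled_setweight_le_edges_weight)
    show "edges_weight E m U W \<le> setweight E m W"
      using assms(3) by (intro edges_weight_le_setweight[OF wb]) auto
    show "edges_weight E m U W - setweight E m U * setweight E m W / setweight E m V1
            \<le> spectral_expansion V1 V2 E m * sqrt (setweight E m U) * sqrt (setweight E m W)"
      using wb assms(3) W_V2 V1_pos by (rule expander_mixing_upper)
  qed
qed


end
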